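(* Let $\bar\pi^*=A\pi^*$ be the optimal investment–reinsurance strategy for problem $(\bar P_{\varepsilon,\bar K_\pi})$, where $\pi^*(t)=\alpha(t,V^{v_f,\hat\pi_{\lambda^*}}(t))\hat\pi_{\lambda^*}$ with $\alpha(t,\cdot)>0$ for $t\in[0,T)$ is the optimal strategy for $(P_{\varepsilon,K_\pi})$. Then for $t\in[0,T)$ it is optimal for the insurer to hold a strictly positive position in reinsurance, i.e. $\bar\pi_2^*(t)>0$, if and only if $$SR_2^{\lambda^*}<\rho\cdot SR_1^{\lambda^*},\qquad\text{where } SR_i^{\lambda^*}=\frac{\mu_i+\lambda_i^*-r}{\sigma_i},\ i=1,2,$$ and $\lambda^*=\arg\min_{x\in K_\pi}\|\gamma+\sigma^{-1}x\|^2$.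
   Context: Market: $dS_0=S_0r\,dt$, $dS_1=S_1(\mu_1dt+\sigma_1dW_1)$, $dS_2=S_2(\mu_2dt+\sigma_2(\rho dW_1+\sqrt{1-\rho^2}dW_2))$, two-dimensional Brownian motion $W$ under $\mathbb Q$; constants $\sigma_i>0$, $\rho\in(-1,1)$; $\sigma=\begin{pmatrix}\sigma_1&0\\ \sigma_2\rho&\sigma_2\sqrt{1-\rho^2}\end{pmatrix}$, $\mu=(\mu_1,\mu_2)'$, $\bar1=(1,1)'$, $\gamma=\sigma^{-1}(\mu-r\bar1)\ne0$; $K_\pi=[0,\infty)\times(-\infty,0]$, $\bar K_\pi=[0,\infty)^2$; utility $U(x)=x^b/b$, $b<1,b\ne0$; $\hat\pi_{\lambda^*}=\frac1{1-b}(\sigma\sigma')^{-1}(\mu+\lambda^*-r\bar1)$. Reinsurance: $G_T>0$, $v_0>0$, $\pi_B^{CM}\in(0,1]$; $V^{v_0,\pi_B}$ is the constant-mix wealth with fraction $\pi_B^{CM}$ in $S_2$ and the rest in $S_0$; $P(t)=S_0(t)\mathbb E_{\tilde{\mathbb Q}}[S_0(T)^{-1}(G_T-V^{v_0,\pi_B}(T))^+\mid\mathcal F_t]$ (a put, $\tilde{\mathbb Q}$ risk-neutral); $d_+(t)=\frac{\ln(V^{v_0,\pi_B}(t)/G_T)+(r+\frac12(\pi_B^{CM}\sigma_2)^2)(T-t)}{\pi_B^{CM}\sigma_2\sqrt{T-t}}$; $A(t)=\operatorname{diag}\big(1,\frac{P(t)}{\pi_B^{CM}V^{v_0,\pi_B}(t)(\Phi(d_+(t))-1)}\big)$.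 $(P_{\varepsilon,K_\pi})$: maximize expected utility of terminal wealth from trading $S_0,S_1,S_2$ (fractions $\pi=(\pi_1,\pi_2)'$ in $S_1,S_2$) subject to $\mathbb Q(V(T)<G_T)\le\varepsilon$ and $\pi(t)\in K_\pi$. $(\bar P_{\varepsilon,\bar K_\pi})$: the same with trading in $S_0,S_1,P$ (fractions $\bar\pi=(\bar\pi_1,\bar\pi_2)'$ in $S_1,P$) and $\bar\pi(t)\in\bar K_\pi$. Here $v_f$ denotes the initial capital parameter of the optimal solution of $(P_{\varepsilon,K_\pi})$. *)

theory Defs
  imports "HOL-Probability.Probability"
begin

definition sigma_mat :: "real \<Rightarrow> real \<Rightarrow> real \<Rightarrow> real^2^2" where
  "sigma_mat s1 s2 rho = vector [vector [s1, 0], vector [s2 * rho, s2 * sqrt (1 - rho^2)]]"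

definition one_vec :: "real^2" where "one_vec = vector [1, 1]"

definition gamma_vec :: "real \<Rightarrow> real \<Rightarrow> real \<Rightarrow> real^2 \<Rightarrow> real \<Rightarrow> real^2" where
  "gamma_vec s1 s2 rho mu r = matrix_inv (sigma_mat s1 s2 rho) *v (mu - r *\<^sub>R one_vec)"

definition K_pi :: "(real^2) set" where
  "K_pi = {x. x $ 1 \<ge> 0 \<and> x $ 2 \<le> 0}"

definition pi_hat :: "real \<Rightarrow> real \<Rightarrow> real \<Rightarrow> real^2 \<Rightarrow> real \<Rightarrow> real \<Rightarrow> real^2 \<Rightarrow> real^2" where
  "pi_hat s1 s2 rho mu r b lam =
     (1 / (1 - b)) *\<^sub>R (matrix_inv (sigma_mat s1 s2 rho ** transpose (sigma_mat s1 s2 rho))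
                          *v (mu + lam - r *\<^sub>R one_vec))"

definition Phi :: "real \<Rightarrow> real" where
  "Phi x = (\<integral>z. indicator {..x} z * std_normal_density z \<partial>lborel)"

text \<open>Constant-mix wealth at T under the risk-neutral measure, given wealth v at time t,
  expressed through the standard normal variable z of the increment of the Brownian motion:
  dV = V (r dt + piB sigma2 dW).\<close>
definition cm_terminal :: "real \<Rightarrow> real \<Rightarrow> real \<Rightarrow> real \<Rightarrow> real \<Rightarrow> real \<Rightarrow> real \<Rightarrow> real" where
  "cm_terminal r s2 piB T t v z =
     v * exp ((r - (piB * s2)^2 / 2) * (T - t) + piB * s2 * sqrt (T - t) * z)"

text \<open>Put price P(t) = S0(t) E_Q~[S0(T)^{-1} (G_T - V(T))^+ | F_t], evaluated at V(t) = v.\<close>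
definition put_price :: "real \<Rightarrow> real \<Rightarrow> real \<Rightarrow> real \<Rightarrow> real \<Rightarrow> real \<Rightarrow> real \<Rightarrow> real" where
  "put_price r s2 piB G T t v =
     exp (- r * (T - t)) *
       (\<integral>z. max 0 (G - cm_terminal r s2 piB T t v z) * std_normal_density z \<partial>lborel)"

definition d_plus :: "real \<Rightarrow> real \<Rightarrow> real \<Rightarrow> real \<Rightarrow> real \<Rightarrow> real \<Rightarrow> real \<Rightarrow> real" where
  "d_plus r s2 piB G T t v =
     (ln (v / G) + (r + (piB * s2)^2 / 2) * (T - t)) / (piB * s2 * sqrt (T - t))"

definition A_mat :: "real \<Rightarrow> real \<Rightarrow> real \<Rightarrow> real \<Rightarrow> real \<Rightarrow> real \<Rightarrow> real \<Rightarrow> real^2^2" where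
  "A_mat r s2 piB G T t v =
     vector [vector [1, 0],
             vector [0, put_price r s2 piB G T t v
                        / (piB * v * (Phi (d_plus r s2 piB G T t v) - 1))]]"

definition sharpe :: "real \<Rightarrow> real \<Rightarrow> real \<Rightarrow> real \<Rightarrow> real" where
  "sharpe mu_i lam_i r s_i = (mu_i + lam_i - r) / s_i"

end

theory Submission
  imports Defs
begin

text \<open>The transformation A is diagonal, and its second diagonal entry
  P / (piB V (Phi(d+) - 1)) is negative, since the put price is positive and Phi < 1.
  Hence the reinsurance position has the opposite sign to the second component of
  pi_hat, which the explicit inverse of the 2x2 covariance matrix sigma sigma' shows to be
  (SR_2 - rho SR_1) / ((1 - b) sigma_2 (1 - rho^2)).\<close>

lemma matrix_mul_matrix_inv:
  fixes M :: "'a::field^'n^'n"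
  assumes "invertible M"
  shows "M ** matrix_inv M = mat 1"
  using someI_ex[of "\<lambda>M'. M ** M' = mat 1 \<and> M' ** M = mat 1"] assms
  unfolding matrix_inv_def invertible_def by blast

lemma matrix_inv_mult_vec_nth_2:
  fixes M :: "'a::field^2^2"
  assumes "det M \<noteq> 0"
  shows "(matrix_inv M *v m) $ 2 = (M$1$1 * m$2 - M$2$1 * m$1) / det M"
proof -
  have inv: "M *v (matrix_inv M *v m) = m"
    using assms by (simp add: matrix_vector_mul_assoc matrix_mul_matrix_inv invertible_det_nz)
  have "(matrix_inv M *v m) $ 2 * det M = det (\<chi> i j. if j = 2 then m$i else M$i$j)"
    using cramer_lemma[of 2 M "matrix_inv M *v m", unfolded inv] by simp
  also have "\<dots> = M$1$1 * m$2 - M$2$1 * m$1"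
    by (simp add: det_2)
  finally show ?thesis
    using assms by (simp add: eq_divide_eq)
qed

lemma sigma_mat_mult_transpose:
  assumes "\<bar>rho\<bar> \<le> 1"
  shows "sigma_mat s1 s2 rho ** transpose (sigma_mat s1 s2 rho) =
           vector [vector [s1^2, s1 * s2 * rho], vector [s1 * s2 * rho, s2^2]]"
proof -
  have "sqrt (1 - rho^2) ^ 2 = 1 - rho^2"
    using assms by (simp add: abs_square_le_1)
  then show ?thesis
    unfolding sigma_mat_def
    by (simp add: vec_eq_iff forall_2 matrix_matrix_mult_def transpose_def sum_2 power2_eq_square
        algebra_simps)
qed

lemma pi_hat_nth_2:
  assumes "s1 > 0" "s2 > 0" "\<bar>rho\<bar> < 1" "b < 1"
  shows "pi_hat s1 s2 rho mu r b lam $ 2 =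
    (sharpe (mu $ 2) (lam $ 2) r s2 - rho * sharpe (mu $ 1) (lam $ 1) r s1)
      / ((1 - b) * s2 * (1 - rho^2))"
proof -
  define M where "M = sigma_mat s1 s2 rho ** transpose (sigma_mat s1 s2 rho)"
  have M: "M = vector [vector [s1^2, s1 * s2 * rho], vector [s1 * s2 * rho, s2^2]]"
    unfolding M_def using assms by (simp add: sigma_mat_mult_transpose)
  have det: "det M = s1^2 * s2^2 * (1 - rho^2)"
    unfolding M by (simp add: det_2 power2_eq_square algebra_simps)
  have "1 - rho^2 > 0"
    using assms by (simp add: abs_square_less_1)
  then have "det M \<noteq> 0"
    unfolding det using assms by simp
  have "pi_hat s1 s2 rho mu r b lam $ 2
      = (M$1$1 * (mu$2 + lam$2 - r) - M$2$1 * (mu$1 + lam$1 - r)) / det M / (1 - b)"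
    unfolding pi_hat_def M_def[symmetric] using \<open>det M \<noteq> 0\<close>
    by (simp add: matrix_inv_mult_vec_nth_2 one_vec_def)
  also have "\<dots> = (sharpe (mu $ 2) (lam $ 2) r s2 - rho * sharpe (mu $ 1) (lam $ 1) r s1)
      / ((1 - b) * s2 * (1 - rho^2))"
  proof -
    have "M$1$1 * (mu$2 + lam$2 - r) - M$2$1 * (mu$1 + lam$1 - r)
        = s1^2 * s2 * (sharpe (mu $ 2) (lam $ 2) r s2 - rho * sharpe (mu $ 1) (lam $ 1) r s1)"
      using assms by (simp add: M sharpe_def field_simps power2_eq_square)
    then show ?thesis
      using assms \<open>1 - rho^2 > 0\<close> unfolding det by (simp add: power2_eq_square)
  qed
  finally show ?thesis .
qed

lemma integral_lborel_pos_if_pos_on_interval: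
  fixes f :: "real \<Rightarrow> real"
  assumes f: "integrable lborel f" and nonneg: "\<And>z. 0 \<le> f z" and "a < b"
    and pos: "\<And>z. a < z \<Longrightarrow> z < b \<Longrightarrow> 0 < f z"
  shows "0 < integral\<^sup>L lborel f"
proof -
  have "integral\<^sup>L lborel f \<noteq> 0"
  proof
    assume "integral\<^sup>L lborel f = 0"
    then have "AE z in lborel. f z = 0"
      using integral_nonneg_eq_0_iff_AE[OF f] nonneg by auto
    then obtain N where N: "{z \<in> space lborel. f z \<noteq> 0} \<subseteq> N" "emeasure lborel N = 0"
        "N \<in> sets lborel"
      by (rule AE_E)
    have "{a<..<b} \<subseteq> N"
      using N(1) pos by force
    then have "emeasure lborel {a<..<b} \<le> emeasure lborel N"
      using N(3) by (rule emeasure_mono)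
    then show False
      using N(2) \<open>a < b\<close> by simp
  qed
  moreover have "integral\<^sup>L lborel f \<ge> 0"
    by (rule integral_nonneg_AE) (simp add: nonneg)
  ultimately show ?thesis
    by simp
qed

lemma integrable_std_normal_density: "integrable lborel std_normal_density"
  using integrable_std_normal_moment[of 0] by simp

lemma Phi_less_1: "Phi x < 1"
proof -
  let ?lower = "\<lambda>z. indicator {..x} z * std_normal_density z"
  let ?upper = "\<lambda>z. indicator {x<..} z * std_normal_density z"
  have integrable: "integrable lborel ?lower" "integrable lborel ?upper"
    using integrable_real_mult_indicator[OF _ integrable_std_normal_density, of "{..x}"]
      integrable_real_mult_indicator[OF _ integrable_std_normal_density, of "{x<..}"]
    by (simp_all add: mult.commute)
  have "Phi x + integral\<^sup>L lborel ?upper = (\<integral>z. ?lower z + ?upper z \<partial>lborel)"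
    unfolding Phi_def using integrable by simp
  also have "\<dots> = (\<integral>z. std_normal_density z \<partial>lborel)"
    by (rule Bochner_Integration.integral_cong) (auto simp: indicator_def)
  also have "\<dots> = 1"
    using integral_std_normal_moment_even[of 0] by simp
  finally have "Phi x = 1 - integral\<^sup>L lborel ?upper"
    by simp
  moreover have "0 < integral\<^sup>L lborel ?upper"
    by (rule integral_lborel_pos_if_pos_on_interval[OF integrable(2), of x "x + 1"])
       (auto simp: normal_density_pos indicator_def)
  ultimately show ?thesis
    by simp
qed

lemma put_price_pos:
  assumes "0 < piB" "0 < s2" "t < T" "0 < v" "0 < G"
  shows "0 < put_price r s2 piB G T t v"
proof -
  define k where "k = piB * s2 * sqrt (T - t)"
  define c where "c = (r - (piB * s2)^2 / 2) * (T - t)"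
  have "k > 0"
    unfolding k_def using assms by simp
  have terminal: "cm_terminal r s2 piB T t v z = v * exp (c + k * z)" for z
    unfolding cm_terminal_def k_def c_def by simp
  define f where "f z = max 0 (G - cm_terminal r s2 piB T t v z) * std_normal_density z" for z
  have nonneg: "0 \<le> f z" for z
    unfolding f_def using normal_density_pos[of 1 0 z] by simp
  have "f \<in> borel_measurable lborel"
    unfolding f_def terminal by measurable
  moreover have "norm (f z) \<le> norm (G * std_normal_density z)" for z
  proof -
    have "0 < v * exp (c + k * z)"
      using assms by simp
    then show ?thesis
      unfolding f_def terminal using assms normal_density_pos[of 1 0 z]
      by (auto simp: abs_mult intro!: mult_right_mono)
  qed
  ultimately have "integrable lborel f"
    using Bochner_Integration.integrable_bound[OF
        integrable_std_normal_density[THEN integrable_mult_right, of G]]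
    by blast
  \<comment> \<open>the put is in the money exactly for z below the threshold z0\<close>
  define z0 where "z0 = (ln (G / v) - c) / k"
  have "0 < f z" if "z < z0" for z
  proof -
    have "k * z < ln (G / v) - c"
      using that \<open>k > 0\<close> unfolding z0_def by (simp add: field_simps)
    then have "exp (c + k * z) < G / v"
      using assms by (metis add.commute exp_less_cancel_iff exp_ln divide_pos_pos less_diff_eq)
    then have "v * exp (c + k * z) < G"
      using assms by (simp add: field_simps)
    then show ?thesis
      unfolding f_def terminal using normal_density_pos[of 1 0 z] by simp
  qed
  then have "0 < integral\<^sup>L lborel f"
    using integral_lborel_pos_if_pos_on_interval[OF \<open>integrable lborel f\<close> nonneg, of "z0 - 1" z0]
    by simp
  then show ?thesis
    unfolding put_price_def f_def[symmetric] by simp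
qed

lemma A_mat_nth_2_2_neg:
  assumes "0 < piB" "0 < s2" "t < T" "0 < v" "0 < G"
  shows "A_mat r s2 piB G T t v $ 2 $ 2 < 0"
proof -
  have "piB * v * (Phi (d_plus r s2 piB G T t v) - 1) < 0"
    using Phi_less_1 assms by (simp add: mult_pos_neg)
  then show ?thesis
    using put_price_pos[OF assms] by (simp add: A_mat_def divide_pos_neg)
qed

theorem proposition4:
  fixes s1 s2 rho r b G piB T t v alpha :: real
    and mu lam :: "real^2"
  assumes "s1 > 0" and "s2 > 0" and "-1 < rho" and "rho < 1"
    and "b < 1" and "b \<noteq> 0"
    and "gamma_vec s1 s2 rho mu r \<noteq> 0"
    and "G > 0" and "0 < piB" and "piB \<le> 1"
    and "0 \<le> t" and "t < T"
    and "v > 0"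
    and "alpha > 0"
    and "is_arg_min (\<lambda>x. (norm (gamma_vec s1 s2 rho mu r + matrix_inv (sigma_mat s1 s2 rho) *v x))^2)
                    (\<lambda>x. x \<in> K_pi) lam"
  defines "pibar_star \<equiv> A_mat r s2 piB G T t v *v (alpha *\<^sub>R pi_hat s1 s2 rho mu r b lam)"
  shows "pibar_star $ 2 > 0 \<longleftrightarrow>
           sharpe (mu $ 2) (lam $ 2) r s2 < rho * sharpe (mu $ 1) (lam $ 1) r s1"
proof -
  have "\<bar>rho\<bar> < 1"
    using assms by (simp add: abs_less_iff)
  then have "0 < (1 - b) * s2 * (1 - rho^2)"
    using assms by (simp add: abs_square_less_1)
  have "pibar_star $ 2 = A_mat r s2 piB G T t v $ 2 $ 2 * (alpha * pi_hat s1 s2 rho mu r b lam $ 2)"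
    unfolding pibar_star_def by (simp add: A_mat_def matrix_vector_mult_def sum_2)
  moreover have "A_mat r s2 piB G T t v $ 2 $ 2 < 0"
    using assms by (simp add: A_mat_nth_2_2_neg)
  ultimately have "pibar_star $ 2 > 0 \<longleftrightarrow> pi_hat s1 s2 rho mu r b lam $ 2 < 0"
    using \<open>alpha > 0\<close> by (simp add: zero_less_mult_iff mult_less_0_iff)
  also have "\<dots> \<longleftrightarrow> sharpe (mu $ 2) (lam $ 2) r s2 < rho * sharpe (mu $ 1) (lam $ 1) r s1"
    using assms \<open>\<bar>rho\<bar> < 1\<close> \<open>0 < (1 - b) * s2 * (1 - rho^2)\<close> by (simp add: pi_hat_nth_2 divide_less_0_iff)
  finally show ?thesis .
qed

end
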